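(* Let $r>1$ and let $k,\ell,m$ be arbitrary positive integers. Let $n$ be the number of vertices of the $(k,\ell,m)$-megastar, choose $x_0$ uniformly at random from its vertex set, and run the Moran process with fitness $r$ on it with initial mutant $x_0$. Then the process fixates with probability at most $1-1/(52r^2\sqrt{n})$.
   Context: Moran process: given a directed graph $G$ and fitness $r$, one vertex $x_0$ is a mutant, the rest non-mutants. At each step a vertex $v$ is chosen with probability proportional to fitness (mutants $r$, non-mutants $1$), an out-neighbour $w$ of $v$ is chosen uniformly at random and the state of $v$ is copied to $w$. Fixation: eventually every vertex is a mutant. The $(k,\ell,m)$-megastar: disjoint union of reservoirs $R_1,\dots,R_\ell$ (size $m$), cliques $K_1,\dots,K_\ell$ (size $k$), feeders $a_1,\dots,a_\ell$, and centre $v^*$ (so $n=1+\ell(m+k+1)$); edges from $v^*$ to all reservoir vertices, from each vertex of $R_i$ to $a_i$, from $a_i$ to each vertex of $K_i$, both directions between distinct vertices of each $K_i$, and from every clique vertex to $v^*$. *)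

theory Defs
  imports Complex_Main
begin

text \<open>A directed graph is given by a finite vertex set V and an out-neighbour
  function out (out v is the set of out-neighbours of v).
  States of the Moran process are the sets of mutant vertices.\<close>

definition fitness :: "real \<Rightarrow> 'a set \<Rightarrow> 'a \<Rightarrow> real" where
  "fitness r S v = (if v \<in> S then r else 1)"

definition total_fitness :: "'a set \<Rightarrow> real \<Rightarrow> 'a set \<Rightarrow> real" where
  "total_fitness V r S = (\<Sum>v\<in>V. fitness r S v)"

definition moran_update :: "'a set \<Rightarrow> 'a \<Rightarrow> 'a \<Rightarrow> 'a set" where
  "moran_update S v w = (if v \<in> S then insert w S else S - {w})"

primrec fix_within :: "'a set \<Rightarrow> ('a \<Rightarrow> 'a set) \<Rightarrow> real \<Rightarrow> nat \<Rightarrow> 'a set \<Rightarrow> real" where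
  "fix_within V out r 0 S = (if S = V then 1 else 0)"
| "fix_within V out r (Suc t) S =
     (\<Sum>v\<in>V. \<Sum>w\<in>out v.
        (fitness r S v / total_fitness V r S) * (1 / real (card (out v)))
        * fix_within V out r t (moran_update S v w))"

text \<open>Fixation probability: probability that eventually all vertices are mutants.
  Since the all-mutant state is absorbing, this is the limit of the t-step
  probabilities.\<close>
definition fixation_prob :: "'a set \<Rightarrow> ('a \<Rightarrow> 'a set) \<Rightarrow> real \<Rightarrow> 'a set \<Rightarrow> real" where
  "fixation_prob V out r S = lim (\<lambda>t. fix_within V out r t S)"

definition avg_fixation_prob :: "'a set \<Rightarrow> ('a \<Rightarrow> 'a set) \<Rightarrow> real \<Rightarrow> real" where
  "avg_fixation_prob V out r = (\<Sum>x\<in>V. fixation_prob V out r {x}) / real (card V)"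

text \<open>The (k,l,m)-megastar. Reservoirs R_i = {Res i j | j<m}, cliques
  K_i = {Cl i j | j<k}, feeders Feed i, for i < l, and the centre.\<close>
datatype mvert = Centre | Res nat nat | Feed nat | Cl nat nat

definition megastar_V :: "nat \<Rightarrow> nat \<Rightarrow> nat \<Rightarrow> mvert set" where
  "megastar_V k l m = {Centre} \<union> {Res i j | i j. i < l \<and> j < m}
     \<union> {Feed i | i. i < l} \<union> {Cl i j | i j. i < l \<and> j < k}"

fun megastar_out :: "nat \<Rightarrow> nat \<Rightarrow> nat \<Rightarrow> mvert \<Rightarrow> mvert set" where
  "megastar_out k l m Centre = {Res i j | i j. i < l \<and> j < m}"
| "megastar_out k l m (Res i j) = {Feed i}"
| "megastar_out k l m (Feed i) = {Cl i j | j. j < k}"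
| "megastar_out k l m (Cl i j) = {Cl i j' | j'. j' < k \<and> j' \<noteq> j} \<union> {Centre}"

end

theory Submission
  imports Defs
begin

text \<open>A nonnegative potential g on mutant sets with g \<ge> 1 on the all-mutant set and nonpositive
  expected change under one Moran step bounds the fixation probability from the initial state.
  A mutant x starting in reservoir R_i has to reproduce onto the feeder a_i before the centre,
  of out-degree l m, overwrites it; a potential supported on the states {x} and {x, a_i} bounds
  its fixation probability by 1 - 1/(5 l r^2). A mutant starting in a clique spreads at rate r
  and is overwritten at rate 1, so it fixates with probability at most r/(r+1). Averaging over
  the l m reservoir and l k clique vertices and using sqrt n \<le> m + l k gives the theorem, even
  with the constant 5 in place of 52.\<close>

definition moran_step :: "'a set \<Rightarrow> ('a \<Rightarrow> 'a set) \<Rightarrow> real \<Rightarrow> ('a set \<Rightarrow> real) \<Rightarrow> 'a set \<Rightarrow> real" where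
  "moran_step V out r g S =
     (\<Sum>v\<in>V. \<Sum>w\<in>out v. fitness r S v / total_fitness V r S * (1 / real (card (out v)))
        * g (moran_update S v w))"

definition moran_drift :: "'a set \<Rightarrow> ('a \<Rightarrow> 'a set) \<Rightarrow> real \<Rightarrow> ('a set \<Rightarrow> real) \<Rightarrow> 'a set \<Rightarrow> real" where
  "moran_drift V out r g S =
     (\<Sum>v\<in>V. \<Sum>w\<in>out v. fitness r S v / real (card (out v)) * (g (moran_update S v w) - g S))"

lemma fix_within_Suc_eq_moran_step:
  "fix_within V out r (Suc t) S = moran_step V out r (fix_within V out r t) S"
  by (simp add: moran_step_def)

lemma moran_drift_empty: "moran_drift V out r g {} = 0"
  by (simp add: moran_drift_def moran_update_def)

locale moran_graph =
  fixes V :: "'a set" and out :: "'a \<Rightarrow> 'a set" and r :: real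
  assumes finite_V: "finite V" and V_nonempty: "V \<noteq> {}"
    and out_subset: "v \<in> V \<Longrightarrow> out v \<subseteq> V" and out_nonempty: "v \<in> V \<Longrightarrow> out v \<noteq> {}"
    and r_pos: "r > 0"
begin

lemma finite_out: "v \<in> V \<Longrightarrow> finite (out v)"
  using finite_V out_subset finite_subset by blast

lemma fitness_nonneg: "fitness r S v \<ge> 0"
  using r_pos by (simp add: fitness_def)

lemma total_fitness_pos: "total_fitness V r S > 0"
  unfolding total_fitness_def using finite_V V_nonempty r_pos
  by (intro sum_pos) (auto simp: fitness_def)

lemma transition_weight_nonneg:
  "0 \<le> fitness r S v / total_fitness V r S * (1 / real (card (out v)))"
  using total_fitness_pos[of S] fitness_nonneg[of S v] by simp

lemma transition_weights_sum:
  "(\<Sum>v\<in>V. \<Sum>w\<in>out v. fitness r S v / total_fitness V r S * (1 / real (card (out v)))) = 1"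
proof -
  have "(\<Sum>v\<in>V. \<Sum>w\<in>out v. fitness r S v / total_fitness V r S * (1 / real (card (out v))))
      = (\<Sum>v\<in>V. fitness r S v / total_fitness V r S)"
  proof (rule sum.cong)
    fix v assume v: "v \<in> V"
    have "card (out v) > 0" using finite_out[OF v] out_nonempty[OF v] by (simp add: card_gt_0_iff)
    then show "(\<Sum>w\<in>out v. fitness r S v / total_fitness V r S * (1 / real (card (out v))))
      = fitness r S v / total_fitness V r S" by simp
  qed simp
  also have "\<dots> = 1"
    using total_fitness_pos[of S] by (simp add: total_fitness_def sum_divide_distrib[symmetric])
  finally show ?thesis .
qed

lemma moran_step_const: "moran_step V out r (\<lambda>_. c) S = c"
proof -
  have "moran_step V out r (\<lambda>_. c) S
      = (\<Sum>v\<in>V. \<Sum>w\<in>out v. fitness r S v / total_fitness V r S * (1 / real (card (out v)))) * c"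
    unfolding moran_step_def by (simp only: sum_distrib_right)
  then show ?thesis using transition_weights_sum[of S] by simp
qed

lemma moran_update_subset:
  "S \<subseteq> V \<Longrightarrow> v \<in> V \<Longrightarrow> w \<in> out v \<Longrightarrow> moran_update S v w \<subseteq> V"
  using out_subset by (auto simp: moran_update_def)

lemma moran_step_mono:
  assumes "S \<subseteq> V" and "\<And>T. T \<subseteq> V \<Longrightarrow> g T \<le> h T"
  shows "moran_step V out r g S \<le> moran_step V out r h S"
  unfolding moran_step_def
  by (intro sum_mono mult_left_mono) (use assms moran_update_subset transition_weight_nonneg in auto)

lemma moran_step_minus_self:
  "moran_step V out r g S - g S = moran_drift V out r g S / total_fitness V r S"
proof -
  have "moran_step V out r g S - g S = moran_step V out r g S - moran_step V out r (\<lambda>_. g S) S"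
    by (simp add: moran_step_const)
  also have "\<dots> = moran_drift V out r g S / total_fitness V r S"
    unfolding moran_step_def moran_drift_def sum_divide_distrib sum_subtractf[symmetric]
    by (intro sum.cong refl) (simp add: diff_divide_distrib algebra_simps)
  finally show ?thesis .
qed

lemma moran_step_le_self_iff: "moran_step V out r g S \<le> g S \<longleftrightarrow> moran_drift V out r g S \<le> 0"
  using moran_step_minus_self[of g S] total_fitness_pos[of S]
  by (smt (verit) divide_nonpos_pos divide_pos_pos)

lemma fix_within_nonneg: "0 \<le> fix_within V out r t S"
proof (induction t arbitrary: S)
  case (Suc t)
  show ?case unfolding fix_within.simps
    by (intro sum_nonneg mult_nonneg_nonneg transition_weight_nonneg Suc)
qed simp

lemma fix_within_le_Suc: "S \<subseteq> V \<Longrightarrow> fix_within V out r t S \<le> fix_within V out r (Suc t) S"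
proof (induction t arbitrary: S)
  case 0
  show ?case
  proof (cases "S = V")
    case True
    then have "moran_update S v w = V" if "v \<in> V" "w \<in> out v" for v w
      using out_subset that by (auto simp: moran_update_def)
    then have "fix_within V out r (Suc 0) S = moran_step V out r (\<lambda>_. 1) S"
      unfolding fix_within_Suc_eq_moran_step moran_step_def by (intro sum.cong refl) simp
    then show ?thesis using True by (simp add: moran_step_const)
  qed (use fix_within_nonneg[of "Suc 0" S] in simp)
next
  case (Suc t)
  then show ?case
    unfolding fix_within_Suc_eq_moran_step[of _ _ _ "Suc t"] fix_within_Suc_eq_moran_step[of _ _ _ t]
    by (intro moran_step_mono) auto
qed

lemma fix_within_le_superharmonic:
  assumes nonneg: "\<And>S. S \<subseteq> V \<Longrightarrow> 0 \<le> g S" and top: "1 \<le> g V"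
    and super: "\<And>S. S \<subseteq> V \<Longrightarrow> moran_step V out r g S \<le> g S"
  shows "S \<subseteq> V \<Longrightarrow> fix_within V out r t S \<le> g S"
proof (induction t arbitrary: S)
  case (Suc t)
  then have "fix_within V out r (Suc t) S \<le> moran_step V out r g S"
    unfolding fix_within_Suc_eq_moran_step by (intro moran_step_mono) auto
  also have "\<dots> \<le> g S" using super Suc by blast
  finally show ?case .
qed (use nonneg top in simp)

text \<open>Along the process g is a nonnegative supermartingale, and it is at least 1 after fixation.\<close>
theorem fixation_prob_le_potential:
  assumes nonneg: "\<And>S. S \<subseteq> V \<Longrightarrow> 0 \<le> g S" and top: "1 \<le> g V"
    and drift: "\<And>S. S \<subseteq> V \<Longrightarrow> moran_drift V out r g S \<le> 0"
    and S: "S \<subseteq> V"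
  shows "fixation_prob V out r S \<le> g S"
proof -
  have super: "\<And>S. S \<subseteq> V \<Longrightarrow> moran_step V out r g S \<le> g S"
    using drift moran_step_le_self_iff by blast
  have inc: "incseq (\<lambda>t. fix_within V out r t S)"
    by (rule incseq_SucI) (rule fix_within_le_Suc[OF S])
  have bounded: "fix_within V out r t S \<le> 1" for t
    by (rule fix_within_le_superharmonic[of "\<lambda>_. 1"]) (use S in \<open>auto simp: moran_step_const\<close>)
  obtain L where L: "(\<lambda>t. fix_within V out r t S) \<longlonglongrightarrow> L"
    using incseq_convergent[OF inc] bounded by blast
  then have "fixation_prob V out r S = L" unfolding fixation_prob_def by (rule limI)
  moreover have "L \<le> g S"
    by (rule LIMSEQ_le_const2[OF L]) (use fix_within_le_superharmonic[OF nonneg top super S] in auto)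
  ultimately show ?thesis by simp
qed

corollary fixation_prob_le_1: "S \<subseteq> V \<Longrightarrow> fixation_prob V out r S \<le> 1"
  by (rule fixation_prob_le_potential[of "\<lambda>_. 1"]) (auto simp: moran_drift_def)

lemma moran_drift_nonpos_at_max:
  assumes "\<And>T. g T \<le> g S"
  shows "moran_drift V out r g S \<le> 0"
  unfolding moran_drift_def
  by (intro sum_nonpos mult_nonneg_nonpos divide_nonneg_nonneg fitness_nonneg) (use assms in auto)

lemma moran_drift_split:
  assumes S: "S \<subseteq> V"
  shows "moran_drift V out r g S
   = (\<Sum>v\<in>S. \<Sum>w\<in>out v - S. r / real (card (out v)) * (g (insert w S) - g S))
   + (\<Sum>w\<in>S. \<Sum>v\<in>{v\<in>V - S. w \<in> out v}. 1 / real (card (out v)) * (g (S - {w}) - g S))"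
proof -
  have finS: "finite S" using S finite_V finite_subset by blast
  let ?F = "\<lambda>v. \<Sum>w\<in>out v. fitness r S v / real (card (out v)) * (g (moran_update S v w) - g S)"
  have V: "V = S \<union> (V - S)" using S by blast
  have "moran_drift V out r g S = (\<Sum>v\<in>S. ?F v) + (\<Sum>v\<in>V - S. ?F v)"
    unfolding moran_drift_def by (subst V, rule sum.union_disjoint) (use finS finite_V in auto)
  also have "(\<Sum>v\<in>S. ?F v) = (\<Sum>v\<in>S. \<Sum>w\<in>out v - S. r / real (card (out v)) * (g (insert w S) - g S))"
  proof (rule sum.cong[OF refl])
    fix v assume v: "v \<in> S"
    have "?F v = (\<Sum>w\<in>out v - S. fitness r S v / real (card (out v)) * (g (moran_update S v w) - g S))"
      by (rule sum.mono_neutral_right) (use v S finite_out in \<open>auto simp: moran_update_def insert_absorb\<close>)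
    then show "?F v = (\<Sum>w\<in>out v - S. r / real (card (out v)) * (g (insert w S) - g S))"
      using v by (simp add: fitness_def moran_update_def)
  qed
  also have "(\<Sum>v\<in>V - S. ?F v)
      = (\<Sum>v\<in>V - S. \<Sum>w\<in>{w\<in>S. w \<in> out v}. 1 / real (card (out v)) * (g (S - {w}) - g S))"
  proof (rule sum.cong[OF refl])
    fix v assume v: "v \<in> V - S"
    have "?F v = (\<Sum>w\<in>{w\<in>S. w \<in> out v}. fitness r S v / real (card (out v)) * (g (moran_update S v w) - g S))"
      by (rule sum.mono_neutral_right) (use v S finite_out in \<open>auto simp: moran_update_def, metis Diff_insert0 Diff_empty\<close>)
    then show "?F v = (\<Sum>w\<in>{w\<in>S. w \<in> out v}. 1 / real (card (out v)) * (g (S - {w}) - g S))"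
      using v by (simp add: fitness_def moran_update_def)
  qed
  also have "\<dots> = (\<Sum>w\<in>S. \<Sum>v\<in>{v\<in>V - S. w \<in> out v}. 1 / real (card (out v)) * (g (S - {w}) - g S))"
    by (rule sum.swap_restrict) (use finS finite_V in auto)
  finally show ?thesis .
qed

end

lemma mem_megastar_V:
  "v \<in> megastar_V k l m \<longleftrightarrow> (case v of Centre \<Rightarrow> True | Res i j \<Rightarrow> i < l \<and> j < m
     | Feed i \<Rightarrow> i < l | Cl i j \<Rightarrow> i < l \<and> j < k)"
  by (cases v) (auto simp: megastar_V_def)

lemma megastar_V_eq:
  "megastar_V k l m = insert Centre ((\<lambda>(i, j). Res i j) ` ({..<l} \<times> {..<m}) \<union> Feed ` {..<l}
     \<union> (\<lambda>(i, j). Cl i j) ` ({..<l} \<times> {..<k}))"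
  by (auto simp: megastar_V_def)

lemma card_megastar_V_le: "card (megastar_V k l m) \<le> 1 + l * m + l + l * k"
proof -
  let ?R = "(\<lambda>(i, j). Res i j) ` ({..<l} \<times> {..<m})" and ?F = "Feed ` {..<l}"
    and ?C = "(\<lambda>(i, j). Cl i j) ` ({..<l} \<times> {..<k})"
  have "card (megastar_V k l m) \<le> 1 + card (?R \<union> ?F \<union> ?C)"
    unfolding megastar_V_eq by (rule card_insert_le_m1) auto
  also have "\<dots> \<le> 1 + (card ?R + card ?F + card ?C)"
    using card_Un_le[of "?R \<union> ?F" ?C] card_Un_le[of ?R ?F] by linarith
  also have "\<dots> \<le> 1 + (l * m + l + l * k)"
    by (intro add_mono card_image_le[THEN order.trans]) (auto simp: card_cartesian_product)
  finally show ?thesis by simp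
qed

lemma sqrt_card_megastar_V_le:
  assumes "k > 0" "l > 0" "m > 0"
  shows "sqrt (real (card (megastar_V k l m))) \<le> real m + real l * real k"
proof -
  have "1 + l * m + l + l * k \<le> (m + l * k)\<^sup>2"
  proof -
    have "l \<le> (l * k) * (l * k)"
      using assms le_square[of "l * k"] by (simp add: Suc_le_eq)
    moreover have "l * m \<le> m * (l * k)" and "l * k \<le> m * (l * k)" and "1 \<le> m * m"
      using assms by (simp_all add: Suc_le_eq)
    moreover have "(m + l * k)\<^sup>2 = m * m + m * (l * k) + m * (l * k) + (l * k) * (l * k)"
      by (simp add: power2_eq_square algebra_simps)
    ultimately show ?thesis by linarith
  qed
  then have "real (card (megastar_V k l m)) \<le> (real m + real l * real k)\<^sup>2"
    using card_megastar_V_le[of k l m] by (metis of_nat_add of_nat_mult of_nat_power of_nat_le_iff le_trans)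
  then show ?thesis by (simp add: real_le_lsqrt)
qed

lemma megastar_out_Centre: "megastar_out k l m Centre = (\<lambda>(i, j). Res i j) ` ({..<l} \<times> {..<m})"
  and megastar_out_Res: "megastar_out k l m (Res i j) = {Feed i}"
  and megastar_out_Feed: "megastar_out k l m (Feed i) = Cl i ` {..<k}"
  and megastar_out_Cl: "megastar_out k l m (Cl i j) = insert Centre (Cl i ` ({..<k} - {j}))"
  by auto

lemmas megastar_out_eqs = megastar_out_Centre megastar_out_Feed megastar_out_Cl

declare megastar_out.simps [simp del] megastar_out_Res [simp]

lemma card_megastar_out_Centre: "card (megastar_out k l m Centre) = l * m"
  unfolding megastar_out_Centre by (simp add: card_image inj_on_def card_cartesian_product)

lemma card_megastar_out_Feed: "card (megastar_out k l m (Feed i)) = k"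
  unfolding megastar_out_Feed by (simp add: card_image inj_on_def)

lemma card_megastar_out_Cl: "j < k \<Longrightarrow> card (megastar_out k l m (Cl i j)) = k"
  by (subst megastar_out_Cl, subst card_insert_disjoint) (auto simp: card_image inj_on_def)

lemma reservoir_potential_le:
  fixes r L M :: real
  assumes r: "r > 1" and L: "L \<ge> 1" and M: "M \<ge> 1"
  defines "d \<equiv> 1 / (L * M)"
  defines "D \<equiv> (r + d)\<^sup>2 + (M - 1) * d"
  shows "r * (r + d) / D \<le> 1 - 1 / (5 * L * r\<^sup>2)"
proof -
  have LM: "1 \<le> L * M" using L M mult_mono[of 1 L 1 M] by simp
  have d: "0 < d" "d \<le> 1" using LM by (auto simp: d_def field_simps)
  have D_pos: "D > 0" unfolding D_def using d r M by (intro add_pos_nonneg) auto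
  have "M \<le> L * M" using mult_right_mono[of 1 L M] L M by simp
  then have "(M - 1) * d \<le> 1" unfolding d_def using LM by (simp add: pos_divide_le_eq)
  moreover have "(r + d)\<^sup>2 \<le> (2 * r)\<^sup>2" using d r by (intro power_mono) auto
  moreover have "1 < r\<^sup>2" using r by simp
  ultimately have D_le: "D \<le> 5 * r\<^sup>2" unfolding D_def by (simp add: power_mult_distrib)
  have "1 / (5 * L * r\<^sup>2) = d * M / (5 * r\<^sup>2)" using L M by (simp add: d_def field_simps)
  also have "\<dots> \<le> d * M / D" using D_pos D_le d M r by (intro divide_left_mono) auto
  also have "\<dots> \<le> d * (r + d + M - 1) / D" using D_pos d r by (intro divide_right_mono mult_left_mono) auto
  also have "\<dots> = 1 - r * (r + d) / D"
    using D_pos unfolding D_def by (simp add: field_simps power2_eq_square)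
  finally show ?thesis by linarith
qed

locale megastar =
  fixes k l m :: nat and r :: real
  assumes k_pos: "k > 0" and l_pos: "l > 0" and m_pos: "m > 0" and r_gt_1: "r > 1"
begin

abbreviation "MV \<equiv> megastar_V k l m"
abbreviation "MO \<equiv> megastar_out k l m"

sublocale moran_graph MV MO r
proof
  show "finite MV" unfolding megastar_V_eq by auto
  show "MV \<noteq> {}" by (auto simp: megastar_V_def)
  show "r > 0" using r_gt_1 by simp
  fix v assume "v \<in> MV"
  then show "MO v \<subseteq> MV" and "MO v \<noteq> {}"
    using k_pos l_pos m_pos by (cases v; auto simp: megastar_V_def megastar_out_eqs)+
qed

lemma Centre_in_MV: "Centre \<in> MV"
  by (simp add: mem_megastar_V)

lemma in_neighbours_Cl:
  assumes "i < l" "j < k"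
  shows "{v \<in> MV - {Cl i j}. Cl i j \<in> MO v} = insert (Feed i) (Cl i ` ({..<k} - {j}))"
  by (rule set_eqI) (use assms in \<open>case_tac x; auto simp: mem_megastar_V megastar_out_eqs\<close>)

lemma in_neighbours_Res:
  assumes "i < l" "j < m" "Centre \<notin> S"
  shows "{v \<in> MV - S. Res i j \<in> MO v} = {Centre}"
  by (rule set_eqI) (use assms in \<open>case_tac x; auto simp: mem_megastar_V megastar_out_eqs\<close>)

lemma in_neighbours_Feed:
  assumes "i < l" "j < m"
  shows "{v \<in> MV - {Res i j, Feed i}. Feed i \<in> MO v} = Res i ` ({..<m} - {j})"
  by (rule set_eqI) (use assms in \<open>case_tac x; auto simp: mem_megastar_V megastar_out_eqs\<close>)

text \<open>A lone clique mutant is replaced at total rate 1: it has k in-neighbours, each of out-degree k.\<close>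
lemma moran_drift_Cl:
  assumes ij: "i < l" "j < k"
  shows "moran_drift MV MO r g {Cl i j}
    = r / real k * (\<Sum>w\<in>MO (Cl i j). g (insert w {Cl i j}) - g {Cl i j}) + (g {} - g {Cl i j})"
proof -
  define x where "x = Cl i j"
  define N where "N = insert (Feed i) (Cl i ` ({..<k} - {j}))"
  have x_MV: "{x} \<subseteq> MV" using ij by (simp add: x_def mem_megastar_V)
  have gain: "(\<Sum>v\<in>{x}. \<Sum>w\<in>MO v - {x}. r / real (card (MO v)) * (g (insert w {x}) - g {x}))
      = r / real k * (\<Sum>w\<in>MO x. g (insert w {x}) - g {x})"
  proof -
    have "MO x - {x} = MO x" by (auto simp: x_def megastar_out_Cl)
    then show ?thesis using card_megastar_out_Cl[OF ij(2)] by (simp add: x_def sum_distrib_left)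
  qed
  have deg_N: "v \<in> N \<Longrightarrow> card (MO v) = k" for v
    by (auto simp: N_def card_megastar_out_Feed card_megastar_out_Cl )
  have card_N: "card N = k"
    unfolding N_def using ij by (subst card_insert_disjoint) (auto simp: card_image inj_on_def)
  have "(\<Sum>w\<in>{x}. \<Sum>v\<in>{v\<in>MV - {x}. w \<in> MO v}. 1 / real (card (MO v)) * (g ({x} - {w}) - g {x}))
      = (\<Sum>v\<in>{v\<in>MV - {x}. x \<in> MO v}. 1 / real (card (MO v)) * (g {} - g {x}))"
    by simp
  also have "\<dots> = (\<Sum>v\<in>N. 1 / real k * (g {} - g {x}))"
    unfolding x_def in_neighbours_Cl[OF ij] N_def[symmetric] by (intro sum.cong refl) (simp add: deg_N)
  also have "\<dots> = g {} - g {x}" using card_N k_pos by simp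
  finally show ?thesis using moran_drift_split[OF x_MV, of g] gain by (simp add: x_def)
qed

lemma moran_drift_Res:
  assumes ij: "i < l" "j < m"
  shows "moran_drift MV MO r g {Res i j}
    = r * (g {Res i j, Feed i} - g {Res i j}) + (g {} - g {Res i j}) / (real l * real m)"
proof -
  have x_MV: "{Res i j} \<subseteq> MV" using ij by (simp add: mem_megastar_V)
  show ?thesis
    using moran_drift_split[OF x_MV, of g] in_neighbours_Res[OF ij, of "{Res i j}"]
    by (simp add: card_megastar_out_Centre insert_commute)
qed

lemma moran_drift_Res_Feed:
  assumes ij: "i < l" "j < m"
  shows "moran_drift MV MO r g {Res i j, Feed i}
    = r / real k * (\<Sum>w\<in>MO (Feed i). g (insert w {Res i j, Feed i}) - g {Res i j, Feed i})
      + (g {Feed i} - g {Res i j, Feed i}) / (real l * real m)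
      + (real m - 1) * (g {Res i j} - g {Res i j, Feed i})"
proof -
  define x where "x = Res i j"
  define F where "F = Feed i"
  have xF: "x \<noteq> F" by (simp add: x_def F_def)
  have S_MV: "{x, F} \<subseteq> MV" using ij by (simp add: x_def F_def mem_megastar_V)
  have "(\<Sum>v\<in>{x, F}. \<Sum>w\<in>MO v - {x, F}. r / real (card (MO v)) * (g (insert w {x, F}) - g {x, F}))
      = (\<Sum>w\<in>MO F. r / real k * (g (insert w {x, F}) - g {x, F}))"
  proof -
    have "MO x = {F}" and "MO F - {x, F} = MO F" by (auto simp: x_def F_def megastar_out_Feed)
    then show ?thesis using xF by (simp add: F_def card_megastar_out_Feed)
  qed
  also have "\<dots> = r / real k * (\<Sum>w\<in>MO F. g (insert w {x, F}) - g {x, F})"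
    by (simp add: sum_distrib_left)
  finally have gain: "(\<Sum>v\<in>{x, F}. \<Sum>w\<in>MO v - {x, F}. r / real (card (MO v)) * (g (insert w {x, F}) - g {x, F}))
      = r / real k * (\<Sum>w\<in>MO F. g (insert w {x, F}) - g {x, F})" .
  have "card (Res i ` ({..<m} - {j})) = m - 1"
    using ij by (simp add: card_image inj_on_def)
  then have "(\<Sum>v\<in>Res i ` ({..<m} - {j}). 1 / real (card (MO v)) * (g {x} - g {x, F}))
      = (real m - 1) * (g {x} - g {x, F})"
    using m_pos by (subst sum.cong[OF refl, where h = "\<lambda>_. g {x} - g {x, F}"]) auto
  moreover have "{x, F} - {x} = {F}" and "{x, F} - {F} = {x}" using xF by auto
  ultimately have loss: "(\<Sum>w\<in>{x, F}. \<Sum>v\<in>{v\<in>MV - {x, F}. w \<in> MO v}. 1 / real (card (MO v)) * (g ({x, F} - {w}) - g {x, F}))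
      = (g {F} - g {x, F}) / (real l * real m) + (real m - 1) * (g {x} - g {x, F})"
    using xF in_neighbours_Res[OF ij, of "{x, F}"] in_neighbours_Feed[OF ij]
    by (simp add: x_def F_def card_megastar_out_Centre)
  show ?thesis using moran_drift_split[OF S_MV, of g] gain loss by (simp add: x_def F_def)
qed

lemma fixation_prob_Cl_le:
  assumes ij: "i < l" "j < k"
  shows "fixation_prob MV MO r {Cl i j} \<le> r / (r + 1)"
proof -
  define x where "x = Cl i j"
  define a where "a = r / (r + 1)"
  define g where "g S = (if S = {} then 0 else if S = {x} then a else (1::real))" for S
  have a_le_1: "a \<le> 1" using r_gt_1 by (simp add: a_def)
  have "fixation_prob MV MO r {x} \<le> g {x}"
  proof (rule fixation_prob_le_potential)
    show "0 \<le> g S" for S using r_gt_1 by (simp add: g_def a_def)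
    show "1 \<le> g MV" using Centre_in_MV by (auto simp: g_def x_def)
    show "{x} \<subseteq> MV" using ij by (simp add: x_def mem_megastar_V)
    fix S assume "S \<subseteq> MV"
    consider "S = {}" | "S = {x}" | "S \<noteq> {}" "S \<noteq> {x}" by blast
    then show "moran_drift MV MO r g S \<le> 0"
    proof cases
      case 1
      then show ?thesis by (simp add: moran_drift_empty)
    next
      case 2
      have "(\<Sum>w\<in>MO x. g (insert w {x}) - g {x}) = (\<Sum>w\<in>MO x. 1 - a)"
        by (intro sum.cong) (auto simp: g_def x_def megastar_out_Cl)
      also have "\<dots> = real k * (1 - a)"
        using card_megastar_out_Cl[OF ij(2)] by (simp add: x_def)
      finally have "moran_drift MV MO r g S = r / real k * (real k * (1 - a)) - a"
        using moran_drift_Cl[OF ij, of g] 2 by (simp add: x_def g_def)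
      also have "\<dots> = 0" using k_pos r_gt_1 by (simp add: a_def field_simps)
      finally show ?thesis by simp
    next
      case 3
      then show ?thesis using a_le_1 by (intro moran_drift_nonpos_at_max) (simp add: g_def)
    qed
  qed
  then show ?thesis by (simp add: g_def x_def a_def)
qed

text \<open>The values a and b make the drift vanish at {x} and {x, F}; all larger states are
  counted as fixation.\<close>
lemma fixation_prob_Res_le:
  assumes ij: "i < l" "j < m"
  shows "fixation_prob MV MO r {Res i j} \<le> 1 - 1 / (5 * real l * r\<^sup>2)"
proof -
  define x where "x = Res i j"
  define F where "F = Feed i"
  define d where "d = 1 / (real l * real m)"
  define D where "D = (r + d)\<^sup>2 + (real m - 1) * d"
  define a where "a = r * (r + d) / D"
  define b where "b = (r + d)\<^sup>2 / D"
  define g where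
    "g S = (if S = {} then 0 else if S = {x} then a else if S = {x, F} then b else (1::real))" for S
  have d_pos: "0 < d" using l_pos m_pos by (simp add: d_def)
  have D_pos: "D > 0" unfolding D_def using d_pos r_gt_1 m_pos by (intro add_pos_nonneg) auto
  have a_nonneg: "0 \<le> a" using r_gt_1 d_pos D_pos by (simp add: a_def)
  have a_le_b: "a \<le> b" using r_gt_1 d_pos D_pos unfolding a_def b_def
    by (intro divide_right_mono) (auto simp: power2_eq_square)
  have b_le_1: "b \<le> 1" using D_pos d_pos m_pos unfolding b_def D_def by simp
  have b_minus_a: "b - a = (r + d) * d / D"
    unfolding a_def b_def by (simp add: diff_divide_distrib[symmetric] power2_eq_square algebra_simps)
  have one_minus_b: "1 - b = (real m - 1) * d / D"
    using D_pos unfolding b_def D_def by (simp add: field_simps)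
  have xF: "x \<noteq> F" by (simp add: x_def F_def)
  have g_x: "g {x} = a" and g_xF: "g {x, F} = b" and g_F: "g {F} = 1"
    using xF by (auto simp: g_def doubleton_eq_iff)
  have "fixation_prob MV MO r {x} \<le> g {x}"
  proof (rule fixation_prob_le_potential)
    show "0 \<le> g S" for S using a_nonneg a_le_b by (simp add: g_def)
    show "1 \<le> g MV" using Centre_in_MV by (auto simp: g_def x_def F_def)
    show "{x} \<subseteq> MV" using ij by (simp add: x_def mem_megastar_V)
    fix S assume "S \<subseteq> MV"
    consider "S = {}" | "S = {x}" | "S = {x, F}" | "S \<noteq> {}" "S \<noteq> {x}" "S \<noteq> {x, F}" by blast
    then show "moran_drift MV MO r g S \<le> 0"
    proof cases
      case 1
      then show ?thesis by (simp add: moran_drift_empty)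
    next
      case 2
      have "moran_drift MV MO r g S = r * (b - a) - d * a"
        using moran_drift_Res[OF ij, of g] 2 g_x g_xF
        by (simp add: x_def F_def g_def d_def)
      also have "\<dots> = 0" unfolding b_minus_a by (simp add: a_def)
      finally show ?thesis by simp
    next
      case 3
      have "(\<Sum>w\<in>MO F. g (insert w {x, F}) - g {x, F}) = (\<Sum>w\<in>MO F. 1 - b)"
        by (intro sum.cong) (auto simp: g_def x_def F_def megastar_out_Feed doubleton_eq_iff)
      also have "\<dots> = real k * (1 - b)" by (simp add: F_def card_megastar_out_Feed)
      finally have "moran_drift MV MO r g S
          = r / real k * (real k * (1 - b)) + d * (1 - b) + (real m - 1) * (a - b)"
        using moran_drift_Res_Feed[OF ij, of g] 3 g_x g_xF g_F
        by (simp add: x_def F_def d_def)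
      also have "\<dots> = (r + d) * (1 - b) - (real m - 1) * (b - a)"
        using k_pos by (simp add: algebra_simps)
      also have "\<dots> = 0" unfolding b_minus_a one_minus_b by simp
      finally show ?thesis by simp
    next
      case 4
      then show ?thesis using a_le_b b_le_1 by (intro moran_drift_nonpos_at_max) (simp add: g_def)
    qed
  qed
  also have "g {x} \<le> 1 - 1 / (5 * real l * r\<^sup>2)"
    unfolding g_x a_def D_def d_def using reservoir_potential_le[of r "real l" "real m"] r_gt_1 l_pos m_pos
    by simp
  finally show ?thesis by (simp add: x_def)
qed

lemma fixation_defect_sum_ge:
  "(real m + real l * real k) / (5 * r\<^sup>2) \<le> (\<Sum>x\<in>MV. 1 - fixation_prob MV MO r {x})"
proof -
  let ?e = "\<lambda>x. 1 - fixation_prob MV MO r {x}"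
  define RS where "RS = (\<lambda>(i, j). Res i j) ` ({..<l} \<times> {..<m})"
  define CS where "CS = (\<lambda>(i, j). Cl i j) ` ({..<l} \<times> {..<k})"
  have card_RS: "card RS = l * m" and card_CS: "card CS = l * k"
    unfolding RS_def CS_def by (simp_all add: card_image inj_on_def card_cartesian_product)
  have "1 / (5 * real l * r\<^sup>2) \<le> ?e x" if x_RS: "x \<in> RS" for x
  proof -
    obtain i j where "x = Res i j" "i < l" "j < m" using x_RS by (auto simp: RS_def)
    then show ?thesis using fixation_prob_Res_le[of i j] by simp
  qed
  then have "real (card RS) * (1 / (5 * real l * r\<^sup>2)) \<le> (\<Sum>x\<in>RS. ?e x)"
    by (rule sum_bounded_below)
  then have sum_RS: "real m / (5 * r\<^sup>2) \<le> (\<Sum>x\<in>RS. ?e x)" using card_RS l_pos by simp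
  have "r \<le> r\<^sup>2" using r_gt_1 by (simp add: power2_eq_square)
  then have "r + 1 \<le> 5 * r\<^sup>2" using r_gt_1 by linarith
  then have "1 / (5 * r\<^sup>2) \<le> 1 / (r + 1)"
    using r_gt_1 by (intro divide_left_mono) auto
  also have "1 / (r + 1) = 1 - r / (r + 1)" using r_gt_1 by (simp add: field_simps)
  finally have clique_defect: "1 / (5 * r\<^sup>2) \<le> 1 - r / (r + 1)" .
  have "1 / (5 * r\<^sup>2) \<le> ?e x" if x_CS: "x \<in> CS" for x
  proof -
    obtain i j where "x = Cl i j" "i < l" "j < k" using x_CS by (auto simp: CS_def)
    then show ?thesis using fixation_prob_Cl_le[of i j] clique_defect by simp
  qed
  then have "real (card CS) * (1 / (5 * r\<^sup>2)) \<le> (\<Sum>x\<in>CS. ?e x)"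
    by (rule sum_bounded_below)
  then have sum_CS: "real l * real k / (5 * r\<^sup>2) \<le> (\<Sum>x\<in>CS. ?e x)" using card_CS by simp
  have "(\<Sum>x\<in>RS. ?e x) + (\<Sum>x\<in>CS. ?e x) = (\<Sum>x\<in>RS \<union> CS. ?e x)"
    by (rule sum.union_disjoint[symmetric]) (auto simp: RS_def CS_def)
  also have "\<dots> \<le> (\<Sum>x\<in>MV. ?e x)"
  proof (rule sum_mono2[OF finite_V])
    show "RS \<union> CS \<subseteq> MV" by (auto simp: RS_def CS_def mem_megastar_V)
    show "0 \<le> ?e x" if "x \<in> MV - (RS \<union> CS)" for x
      using that fixation_prob_le_1[of "{x}"] by simp
  qed
  finally show ?thesis unfolding add_divide_distrib using sum_RS sum_CS by linarith
qed

end


theorem theorem7p3: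
  fixes r :: real and k l m :: nat
  assumes "r > 1" and "k > 0" and "l > 0" and "m > 0"
  shows "avg_fixation_prob (megastar_V k l m) (megastar_out k l m) r
           \<le> 1 - 1 / (52 * r^2 * sqrt (real (card (megastar_V k l m))))"
proof -
  interpret megastar k l m r using assms by unfold_locales
  define n where "n = real (card MV)"
  define s where "s = sqrt n"
  have n_pos: "n > 0" using finite_V Centre_in_MV by (auto simp: n_def card_gt_0_iff)
  have s_pos: "s > 0" and n_eq: "n = s * s" using n_pos by (simp_all add: s_def)
  have r2: "r\<^sup>2 > 0" using assms(1) by simp
  have "avg_fixation_prob MV MO r = 1 - (\<Sum>x\<in>MV. 1 - fixation_prob MV MO r {x}) / n"
    using n_pos by (simp add: avg_fixation_prob_def sum_subtractf n_def field_simps)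
  also have "\<dots> \<le> 1 - s / (5 * r\<^sup>2) / n"
  proof -
    have "s / (5 * r\<^sup>2) \<le> (real m + real l * real k) / (5 * r\<^sup>2)"
      using sqrt_card_megastar_V_le[OF assms(2-4)] r2 by (simp add: s_def n_def divide_right_mono)
    also have "\<dots> \<le> (\<Sum>x\<in>MV. 1 - fixation_prob MV MO r {x})" by (rule fixation_defect_sum_ge)
    finally have "s / (5 * r\<^sup>2) / n \<le> (\<Sum>x\<in>MV. 1 - fixation_prob MV MO r {x}) / n"
      using n_pos by (intro divide_right_mono) auto
    then show ?thesis by linarith
  qed
  also have "\<dots> = 1 - 1 / (5 * r\<^sup>2 * s)" using s_pos by (simp add: n_eq field_simps)
  also have "\<dots> \<le> 1 - 1 / (52 * r\<^sup>2 * s)" using s_pos r2 by (simp add: frac_le)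
  finally show ?thesis by (simp add: s_def n_def)
qed

end
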